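(* Let $\mathbf{u},\mathbf{v}\in\mathbb{R}^2$ be fixed linearly independent unit vectors, and let $D_1\subset\mathbb{R}^2$ be an open disc of radius $r_1$ centered at the origin. Let $\mathbf{f}=(f_1,f_2)$ be a vector field on $\mathbb{R}^2$ with $f_1,f_2\in C^2_c(D_1)$. Then the longitudinal V-line transform satisfies $\mathcal{L}\mathbf{f}\equiv 0$ on $\mathbb{R}^2$ if and only if $\mathbf{f}=\nabla V$ for some scalar function $V$.
   Context: For a function $h$ on $\mathbb{R}^2$ and a unit vector $\mathbf{u}$, the divergent beam transform is $\mathcal{X}_{\mathbf{u}}h(\mathbf{x})=\int_0^\infty h(\mathbf{x}+t\mathbf{u})\,dt$. The longitudinal V-line transform of $\mathbf{f}$ (with respect to the fixed directions $\mathbf{u},\mathbf{v}$) is the function on $\mathbb{R}^2$ given by $\mathcal{L}\mathbf{f}=-\mathcal{X}_{\mathbf{u}}(\mathbf{f}\cdot\mathbf{u})+\mathcal{X}_{\mathbf{v}}(\mathbf{f}\cdot\mathbf{v})$, where $\cdot$ is the Euclidean dot product. *)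

theory Defs
  imports "HOL-Analysis.Analysis"
begin

definition C2 :: "((real^2) \<Rightarrow> real) \<Rightarrow> bool" where
  "C2 g \<longleftrightarrow> (\<exists>(g' :: real^2 \<Rightarrow> ((real^2) \<Rightarrow>\<^sub>L real))
                 (g'' :: real^2 \<Rightarrow> ((real^2) \<Rightarrow>\<^sub>L ((real^2) \<Rightarrow>\<^sub>L real))).
      (\<forall>x. (g has_derivative blinfun_apply (g' x)) (at x)) \<and>
      (\<forall>x. (g' has_derivative blinfun_apply (g'' x)) (at x)) \<and>
      continuous_on UNIV g'')"

definition C2c :: "(real^2) set \<Rightarrow> ((real^2) \<Rightarrow> real) \<Rightarrow> bool" where
  "C2c D g \<longleftrightarrow> C2 g \<and> compact (closure {x. g x \<noteq> 0}) \<and> closure {x. g x \<noteq> 0} \<subseteq> D"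

definition divbeam :: "real^2 \<Rightarrow> ((real^2) \<Rightarrow> real) \<Rightarrow> real^2 \<Rightarrow> real" where
  "divbeam u h x = integral {0..} (\<lambda>t. h (x + t *\<^sub>R u))"

definition LVT :: "real^2 \<Rightarrow> real^2 \<Rightarrow> ((real^2) \<Rightarrow> real^2) \<Rightarrow> real^2 \<Rightarrow> real" where
  "LVT u v f x = - divbeam u (\<lambda>y. f y \<bullet> u) x + divbeam v (\<lambda>y. f y \<bullet> v) x"

end

theory Submission
  imports Defs
begin

text \<open>If \<open>\<L>f = 0\<close>, then \<open>V := -\<X>\<^sub>u(f\<cdot>u) = -\<X>\<^sub>v(f\<cdot>v)\<close>. Differentiating a
  divergent beam transform along its own direction recovers the integrand, so the
  directional derivatives of \<open>V\<close> are \<open>f\<cdot>u\<close> along \<open>u\<close> and \<open>f\<cdot>v\<close> along \<open>v\<close>; as they are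
  continuous and \<open>u, v\<close> form a basis, \<open>V\<close> is differentiable with gradient \<open>f\<close>.
  Conversely, if \<open>f = \<nabla>V\<close> has compact support, then \<open>V\<close> is constant, say \<open>c\<close>, on the
  connected exterior of a disc, and the fundamental theorem of calculus along rays gives
  \<open>\<X>\<^sub>w(f\<cdot>w) = c - V\<close> for every unit vector \<open>w\<close>, so the two terms of \<open>\<L>f\<close> cancel.\<close>

lemma C2_imp_continuous:
  assumes "C2 g"
  shows "continuous_on UNIV g"
proof -
  from assms obtain g' where "\<And>x. (g has_derivative blinfun_apply (g' x)) (at x)"
    unfolding C2_def by blast
  then show ?thesis
    by (intro continuous_at_imp_continuous_on ballI has_derivative_continuous)
qed

lemma C2c_vanishes_outside:
  assumes "C2c D g" and "x \<notin> D"
  shows "g x = 0"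
proof (rule ccontr)
  assume "g x \<noteq> 0"
  then have "x \<in> closure {x. g x \<noteq> 0}"
    by (simp add: closure_def)
  with assms show False
    unfolding C2c_def by blast
qed

lemma linear_coordinates_in_plane:
  fixes u v :: "'a::euclidean_space"
  assumes "DIM('a) = 2" and indep: "\<forall>a b. a *\<^sub>R u + b *\<^sub>R v = 0 \<longrightarrow> a = 0 \<and> b = 0"
  obtains g :: "'a \<Rightarrow> real \<times> real" where "linear g" "\<And>h. fst (g h) *\<^sub>R u + snd (g h) *\<^sub>R v = h"
proof -
  define L :: "real \<times> real \<Rightarrow> 'a" where "L p = fst p *\<^sub>R u + snd p *\<^sub>R v" for p
  have "linear L" unfolding L_def by (auto intro!: linearI simp: algebra_simps)
  moreover have "inj L"
    unfolding linear_injective_0[OF \<open>linear L\<close>] L_def using indep by (auto simp: zero_prod_def)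
  moreover have "dim (UNIV :: 'a set) = dim (UNIV :: (real \<times> real) set)"
    using assms(1) by simp
  ultimately obtain g where "linear g" "\<And>h. L (g h) = h"
    using linear_injective_isomorphism by metis
  then show ?thesis using that unfolding L_def by blast
qed

lemma has_derivative_from_directional_derivatives:
  fixes V :: "'a::euclidean_space \<Rightarrow> real" and F :: "'a \<Rightarrow> 'a"
  assumes "DIM('a) = 2" and indep: "\<forall>a b. a *\<^sub>R u + b *\<^sub>R v = 0 \<longrightarrow> a = 0 \<and> b = 0"
    and du: "\<And>y s. ((\<lambda>s. V (y + s *\<^sub>R u)) has_real_derivative F (y + s *\<^sub>R u) \<bullet> u) (at s)"
    and dv: "\<And>y s. ((\<lambda>s. V (y + s *\<^sub>R v)) has_real_derivative F (y + s *\<^sub>R v) \<bullet> v) (at s)"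
    and cv: "continuous_on UNIV (\<lambda>y. F y \<bullet> v)"
  shows "(V has_derivative (\<lambda>h. F x \<bullet> h)) (at x)"
proof -
  obtain g where "linear g" and g: "\<And>h. fst (g h) *\<^sub>R u + snd (g h) *\<^sub>R v = h"
    using linear_coordinates_in_plane[OF assms(1,2)] by blast
  have deriv_coords: "((\<lambda>(a, b). V (a *\<^sub>R u + b *\<^sub>R v)) has_derivative
            (\<lambda>(ta, tb). (F (a *\<^sub>R u + b *\<^sub>R v) \<bullet> u) * ta + (F (a *\<^sub>R u + b *\<^sub>R v) \<bullet> v) * tb))
          (at (a, b))" for a b
  proof -
    let ?Fv = "\<lambda>a b. blinfun_scaleR_left (F (a *\<^sub>R u + b *\<^sub>R v) \<bullet> v)"
    have "((\<lambda>a. V (a *\<^sub>R u + b *\<^sub>R v)) has_derivative (*) (F (a *\<^sub>R u + b *\<^sub>R v) \<bullet> u)) (at a)"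
      using du[of "b *\<^sub>R v" a] by (simp add: has_field_derivative_def add.commute)
    moreover have "((\<lambda>b. V (a *\<^sub>R u + b *\<^sub>R v)) has_derivative blinfun_apply (?Fv a b)) (at b)" for a b
      using dv[of "a *\<^sub>R u" b] unfolding has_field_derivative_def
      by (rule has_derivative_eq_rhs) (simp add: fun_eq_iff)
    moreover have "continuous (at (a, b) within UNIV \<times> UNIV) (\<lambda>(a, b). ?Fv a b)"
    proof -
      have "continuous_on UNIV (\<lambda>p :: real \<times> real. F (fst p *\<^sub>R u + snd p *\<^sub>R v) \<bullet> v)"
        by (rule continuous_on_compose2[OF cv]) (auto intro!: continuous_intros)
      then have "continuous_on UNIV (\<lambda>p :: real \<times> real. ?Fv (fst p) (snd p))"
        by (rule bounded_linear.continuous_on[OF bounded_linear_blinfun_scaleR_left])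
      then show ?thesis by (simp add: case_prod_beta' continuous_on_eq_continuous_at)
    qed
    ultimately have "((\<lambda>(a, b). V (a *\<^sub>R u + b *\<^sub>R v)) has_derivative
        (\<lambda>(ta, tb). (F (a *\<^sub>R u + b *\<^sub>R v) \<bullet> u) * ta + blinfun_apply (?Fv a b) tb))
        (at (a, b) within UNIV \<times> UNIV)"
      by (intro has_derivative_partialsI) auto
    then show ?thesis by (simp add: mult.commute)
  qed
  have "(V has_derivative (\<lambda>h. (F x \<bullet> u) * fst (g h) + (F x \<bullet> v) * snd (g h))) (at x)"
    using has_derivative_compose[OF linear_imp_has_derivative[OF \<open>linear g\<close>]
        deriv_coords[of "fst (g x)" "snd (g x)", unfolded prod.collapse]]
    by (simp add: g split_beta)
  moreover have "(F x \<bullet> u) * fst (g h) + (F x \<bullet> v) * snd (g h) = F x \<bullet> h" for h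
  proof -
    have "F x \<bullet> h = F x \<bullet> (fst (g h) *\<^sub>R u + snd (g h) *\<^sub>R v)" by (simp only: g)
    then show ?thesis by (simp add: inner_add_right)
  qed
  ultimately show ?thesis by (rule has_derivative_eq_rhs[OF _ ext])
qed

lemma norm_ray_ge:
  fixes y w :: "'a::real_normed_vector"
  assumes "norm w = 1" and "t \<ge> norm y + r"
  shows "norm (y + t *\<^sub>R w) \<ge> r"
proof -
  have "norm (t *\<^sub>R w) \<le> norm (y + t *\<^sub>R w) + norm y"
    using norm_triangle_ineq4[of "y + t *\<^sub>R w" y] by simp
  then show ?thesis
    using assms by auto
qed

lemma has_integral_atLeast_if_vanishes_beyond:
  fixes h :: "real \<Rightarrow> 'a::banach"
  assumes "(h has_integral i) {a..b}" and "\<And>t. t > b \<Longrightarrow> h t = 0"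
  shows "(h has_integral i) {a..}"
proof -
  have "{a..b} \<subseteq> {a..}"
    by auto
  then have "((\<lambda>t. if t \<in> {a..b} then h t else 0) has_integral i) {a..}"
    using assms(1) by (simp only: has_integral_restrict)
  moreover have "((\<lambda>t. if t \<in> {a..b} then h t else 0) has_integral i) {a..} \<longleftrightarrow> (h has_integral i) {a..}"
    by (rule has_integral_cong) (use assms(2) in auto)
  ultimately show ?thesis
    by blast
qed

lemma divbeam_along_ray:
  fixes g :: "real^2 \<Rightarrow> real"
  assumes "continuous_on UNIV g" and "\<And>t. t > N \<Longrightarrow> g (y + t *\<^sub>R w) = 0" and "s \<le> N"
  shows "divbeam w g (y + s *\<^sub>R w) = integral {s..N} (\<lambda>t. g (y + t *\<^sub>R w))"
proof -
  let ?h = "\<lambda>t. g (y + t *\<^sub>R w)"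
  have "continuous_on UNIV ?h"
    by (rule continuous_on_compose2[OF assms(1)]) (auto intro!: continuous_intros)
  then have "(?h has_integral integral {s..N} ?h) {s..N}"
    by (intro integrable_integral integrable_continuous_real) (auto intro: continuous_on_subset)
  then have "((\<lambda>t. ?h (t + s)) has_integral integral {s..N} ?h) {0..N - s}"
    using has_integral_shift_real_ivl[of ?h _ s N s] by simp
  then have "((\<lambda>t. ?h (t + s)) has_integral integral {s..N} ?h) {0..}"
    by (rule has_integral_atLeast_if_vanishes_beyond) (use assms(2) in auto)
  then show ?thesis
    unfolding divbeam_def by (simp add: integral_unique scaleR_add_left algebra_simps)
qed

lemma divbeam_has_real_derivative_along_ray:
  fixes g :: "real^2 \<Rightarrow> real"
  assumes cont: "continuous_on UNIV g" and supp: "\<And>y. norm y \<ge> r \<Longrightarrow> g y = 0"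
    and "norm w = 1"
  shows "((\<lambda>s. divbeam w g (y + s *\<^sub>R w)) has_real_derivative - g (y + s0 *\<^sub>R w)) (at s0)"
proof -
  let ?h = "\<lambda>t. g (y + t *\<^sub>R w)"
  define N where "N = norm y + \<bar>r\<bar> + \<bar>s0\<bar> + 1"
  have "s0 < N"
    unfolding N_def using abs_ge_self[of s0] norm_ge_zero[of y] abs_ge_zero[of r] by linarith
  have vanish: "?h t = 0" if "t > N" for t
    using supp norm_ray_ge[OF assms(3), of y r t] that abs_ge_self[of r] unfolding N_def by auto
  have "continuous_on {s0 - 1..N} ?h"
    by (rule continuous_on_compose2[OF cont]) (auto intro!: continuous_intros)
  then have "((\<lambda>s. integral {s..N} ?h) has_real_derivative - ?h s0) (at s0 within {s0 - 1..N})"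
    by (rule integral_has_real_derivative') (use \<open>s0 < N\<close> in auto)
  moreover have "at s0 within {s0 - 1..N} = at s0"
    by (rule at_within_interior) (use \<open>s0 < N\<close> in auto)
  ultimately have "((\<lambda>s. integral {s..N} ?h) has_real_derivative - ?h s0) (at s0)"
    by simp
  then show ?thesis
    by (rule has_field_derivative_transform_within_open[where S = "{..<N}"])
      (use \<open>s0 < N\<close> in \<open>auto intro!: divbeam_along_ray[OF cont vanish, symmetric]\<close>)
qed

lemma divbeam_of_gradient:
  fixes V :: "real^2 \<Rightarrow> real" and f :: "real^2 \<Rightarrow> real^2"
  assumes grad: "\<And>x. (V has_derivative (\<lambda>h. f x \<bullet> h)) (at x)"
    and supp: "\<And>y. norm y \<ge> r \<Longrightarrow> f y = 0" and outer: "\<And>y. norm y > r \<Longrightarrow> V y = c"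
    and "norm w = 1"
  shows "divbeam w (\<lambda>y. f y \<bullet> w) x = c - V x"
proof -
  define M where "M = norm x + \<bar>r\<bar> + 1"
  have vanish: "f (x + t *\<^sub>R w) = 0" if "t > M" for t
    using supp norm_ray_ge[OF assms(4), of x r t] that abs_ge_self[of r] unfolding M_def by auto
  have "((\<lambda>t. V (x + t *\<^sub>R w)) has_vector_derivative f (x + t *\<^sub>R w) \<bullet> w) (at t within {0..M})" for t
  proof -
    have "((\<lambda>t. V (x + t *\<^sub>R w)) has_derivative (\<lambda>d. f (x + t *\<^sub>R w) \<bullet> (d *\<^sub>R w))) (at t)"
      by (rule has_derivative_compose[OF _ grad]) (auto intro!: derivative_eq_intros)
    then show ?thesis
      unfolding has_vector_derivative_def by (auto intro: has_derivative_at_withinI)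
  qed
  then have "((\<lambda>t. f (x + t *\<^sub>R w) \<bullet> w) has_integral V (x + M *\<^sub>R w) - V (x + 0 *\<^sub>R w)) {0..M}"
    by (intro fundamental_theorem_of_calculus) (auto simp: M_def)
  moreover have "V (x + M *\<^sub>R w) = c"
    using outer norm_ray_ge[OF assms(4), of x "\<bar>r\<bar> + 1" M] by (simp add: M_def)
  ultimately have "((\<lambda>t. f (x + t *\<^sub>R w) \<bullet> w) has_integral c - V x) {0..}"
    by (intro has_integral_atLeast_if_vanishes_beyond) (auto simp: vanish)
  then show ?thesis
    unfolding divbeam_def by (rule integral_unique)
qed

lemma constant_outside_ball_if_gradient_vanishes:
  fixes V :: "'a::euclidean_space \<Rightarrow> real" and f :: "'a \<Rightarrow> 'a"
  assumes "DIM('a) \<ge> 2" and grad: "\<And>x. (V has_derivative (\<lambda>h. f x \<bullet> h)) (at x)"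
    and supp: "\<And>y. norm y \<ge> r \<Longrightarrow> f y = 0"
  obtains c where "\<And>y. norm y > r \<Longrightarrow> V y = c"
proof -
  have "V constant_on (- cball 0 r)"
  proof (rule has_derivative_zero_connected_constant_on[where K = "{}"])
    show "connected (- cball (0::'a) r)"
      by (rule connected_complement_bounded_convex) (use assms(1) in auto)
    show "continuous_on (- cball 0 r) V"
      using grad by (meson continuous_at_imp_continuous_on has_derivative_continuous)
    show "\<forall>x\<in>- cball 0 r - {}. (V has_derivative (\<lambda>h. 0)) (at x within - cball 0 r)"
    proof
      fix x :: 'a
      assume "x \<in> - cball 0 r - {}"
      then have "f x = 0"
        using supp by simp
      then show "(V has_derivative (\<lambda>h. 0)) (at x within - cball 0 r)"
        using grad[of x] by (simp add: has_derivative_at_withinI)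
    qed
  qed auto
  then show ?thesis
    using that unfolding constant_on_def by auto
qed

lemma gradient_of_divbeam_if_LVT_zero:
  fixes u v :: "real^2" and f :: "real^2 \<Rightarrow> real^2"
  assumes "norm u = 1" and "norm v = 1" and indep: "\<forall>a b. a *\<^sub>R u + b *\<^sub>R v = 0 \<longrightarrow> a = 0 \<and> b = 0"
    and cont: "continuous_on UNIV f" and supp: "\<And>y. norm y \<ge> r \<Longrightarrow> f y = 0"
    and LVT_zero: "\<And>x. LVT u v f x = 0"
  shows "((\<lambda>x. - divbeam u (\<lambda>y. f y \<bullet> u) x) has_derivative (\<lambda>h. f x \<bullet> h)) (at x)"
proof (rule has_derivative_from_directional_derivatives[OF _ indep])
  have cont_dir: "continuous_on UNIV (\<lambda>y. f y \<bullet> w)" for w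
    using cont by (intro continuous_intros)
  have supp_dir: "f y \<bullet> w = 0" if "norm y \<ge> r" for y w
    using supp[OF that] by simp
  have beams: "divbeam u (\<lambda>y. f y \<bullet> u) = divbeam v (\<lambda>y. f y \<bullet> v)"
  proof
    fix x
    show "divbeam u (\<lambda>y. f y \<bullet> u) x = divbeam v (\<lambda>y. f y \<bullet> v) x"
      using LVT_zero[of x] unfolding LVT_def by linarith
  qed
  show "continuous_on UNIV (\<lambda>y. f y \<bullet> v)"
    by (rule cont_dir)
  fix y s
  show "((\<lambda>s. - divbeam u (\<lambda>y. f y \<bullet> u) (y + s *\<^sub>R u)) has_real_derivative f (y + s *\<^sub>R u) \<bullet> u) (at s)"
    using DERIV_minus[OF divbeam_has_real_derivative_along_ray[OF cont_dir supp_dir assms(1)]] by simp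
  show "((\<lambda>s. - divbeam u (\<lambda>y. f y \<bullet> u) (y + s *\<^sub>R v)) has_real_derivative f (y + s *\<^sub>R v) \<bullet> v) (at s)"
    unfolding beams
    using DERIV_minus[OF divbeam_has_real_derivative_along_ray[OF cont_dir supp_dir assms(2)]] by simp
qed simp

lemma LVT_zero_if_gradient:
  fixes u v :: "real^2" and f :: "real^2 \<Rightarrow> real^2"
  assumes "norm u = 1" and "norm v = 1" and grad: "\<And>x. (V has_derivative (\<lambda>h. f x \<bullet> h)) (at x)"
    and supp: "\<And>y. norm y \<ge> r \<Longrightarrow> f y = 0"
  shows "LVT u v f x = 0"
proof -
  obtain c where "\<And>y. norm y > r \<Longrightarrow> V y = c"
    using constant_outside_ball_if_gradient_vanishes[OF _ grad supp] by auto
  then show ?thesis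
    unfolding LVT_def using divbeam_of_gradient[OF grad supp] assms(1,2) by simp
qed

theorem theorem1:
  fixes u v :: "real^2" and r1 :: real and f :: "real^2 \<Rightarrow> real^2"
  assumes "norm u = 1" and "norm v = 1"
    and "\<forall>a b. a *\<^sub>R u + b *\<^sub>R v = 0 \<longrightarrow> a = 0 \<and> b = 0"
    and "r1 > 0"
    and "C2c (ball 0 r1) (\<lambda>x. f x $ 1)" and "C2c (ball 0 r1) (\<lambda>x. f x $ 2)"
  shows "(\<forall>x. LVT u v f x = 0) \<longleftrightarrow>
         (\<exists>V :: real^2 \<Rightarrow> real. \<forall>x. (V has_derivative (\<lambda>h. f x \<bullet> h)) (at x))"
proof -
  have "continuous_on UNIV (\<lambda>x. f x $ i)" for i
    using exhaust_2[of i] assms(5,6)[unfolded C2c_def] by (auto intro: C2_imp_continuous)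
  then have cont: "continuous_on UNIV f"
    using continuous_on_vec_lambda[of UNIV "\<lambda>i x. f x $ i"] by simp
  have supp: "f y = 0" if "norm y \<ge> r1" for y
    using assms(5,6)[THEN C2c_vanishes_outside, of y] that by (simp add: vec_eq_iff forall_2)
  show ?thesis
  proof
    assume "\<forall>x. LVT u v f x = 0"
    then show "\<exists>V :: real^2 \<Rightarrow> real. \<forall>x. (V has_derivative (\<lambda>h. f x \<bullet> h)) (at x)"
      using gradient_of_divbeam_if_LVT_zero[OF assms(1-3) cont supp] by blast
  next
    assume "\<exists>V :: real^2 \<Rightarrow> real. \<forall>x. (V has_derivative (\<lambda>h. f x \<bullet> h)) (at x)"
    then obtain V :: "real^2 \<Rightarrow> real" where grad: "\<And>x. (V has_derivative (\<lambda>h. f x \<bullet> h)) (at x)"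
      by blast
    show "\<forall>x. LVT u v f x = 0"
      using LVT_zero_if_gradient[where r = r1, OF assms(1,2) grad supp] by blast
  qed
qed

end
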